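(* Let $\lambda\in\mathbb{R}$, let $r\ge s\ge1$ and $n\ge1$ be integers, and let $k\ge0$ be an integer. Then \[ \frac{(-1)^k}{k!}\sum_{p=0}^{k}(-1)^p\binom{k}{p}\bigg(\prod_{j=1}^{n}\big[(p+(j-1)(r-s))_s-(n-j)\lambda\big]\bigg)= \begin{cases} S_\lambda^{(r,s)}(n,k), & \text{if } 0\le k\le ns,\\ 0, & \text{if } k>ns. \end{cases} \]
   Context: Notation: $(x)_0=1$, $(x)_m=x(x-1)\cdots(x-m+1)$ for $m\ge1$. Let $D=\frac{d}{dx}$ and let $x$ also denote the operator of multiplication by $x$. The generalized degenerate $(r,s)$-Stirling numbers of the second kind $S_\lambda^{(r,s)}(n,k)$, $0\le k\le ns$, are defined by the operator identity \[ \prod_{k=0}^{n-1}\Big(x^{r}D^{s}-k\lambda\, x^{r-s}\Big)=x^{n(r-s)}\sum_{k=0}^{ns}S_\lambda^{(r,s)}(n,k)\,x^{k}D^{k}, \] where the product of operators is written with the factors $k=0,1,\dots,n-1$ from left to right. *)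

theory Defs
  imports "HOL-Computational_Algebra.Polynomial"
begin

definition falling :: "real \<Rightarrow> nat \<Rightarrow> real" where
  "falling x m = (\<Prod>i<m. (x - of_nat i))"

definition rs_op :: "real \<Rightarrow> nat \<Rightarrow> nat \<Rightarrow> nat \<Rightarrow> real poly \<Rightarrow> real poly" where
  "rs_op lam r s k f = monom 1 r * (pderiv ^^ s) f - smult (of_nat k * lam) (monom 1 (r - s) * f)"

text \<open>Product of operators with factors k = 0,...,n-1 from left to right:
  the rightmost factor (k = n-1) is applied first.\<close>
definition rs_op_prod :: "real \<Rightarrow> nat \<Rightarrow> nat \<Rightarrow> nat \<Rightarrow> real poly \<Rightarrow> real poly" where
  "rs_op_prod lam r s n f = foldr (rs_op lam r s) [0..<n] f"

text \<open>Generalized degenerate (r,s)-Stirling numbers of the second kind, defined by the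
  operator identity (as operators on real polynomials, which determines the coefficients
  uniquely); coefficients with index beyond n*s are set to 0.\<close>
definition stirling_rs :: "real \<Rightarrow> nat \<Rightarrow> nat \<Rightarrow> nat \<Rightarrow> nat \<Rightarrow> real" where
  "stirling_rs lam r s n k = (THE c :: nat \<Rightarrow> real. (\<forall>j > n * s. c j = 0) \<and>
     (\<forall>f. rs_op_prod lam r s n f =
        monom 1 (n * (r - s)) * (\<Sum>j\<le>n * s. smult (c j) (monom 1 j * (pderiv ^^ j) f)))) k"

end

theory Submission
  imports Defs
begin

text \<open>On monomials the product of operators acts diagonally: it sends \<open>x^m\<close> to
  \<open>w(m) x^(m + n(r - s))\<close>, where \<open>w(x) = \<Prod>j=1..n. (x + (j - 1)(r - s))\<^sub>s - (n - j)\<lambda>\<close>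
  is a polynomial of degree at most \<open>ns\<close>, whereas \<open>x^k D^k\<close> multiplies \<open>x^m\<close> by \<open>(m)\<^sub>k\<close>.
  Hence \<open>S(n,k)\<close> is the coefficient of \<open>(x)\<^sub>k\<close> in the expansion of \<open>w\<close> in the falling
  factorial basis, and this coefficient is extracted by the finite difference identity
  \<open>\<Sum>p\<le>k. (-1)^(k-p) (k choose p) (p)\<^sub>j = k! \<delta>\<^sub>j\<^sub>k\<close>.\<close>

lemma falling_Suc: "falling x (Suc s) = falling x s * (x - of_nat s)"
  by (simp add: falling_def)

lemma falling_of_nat: "falling (real p) j = fact j * real (p choose j)"
  unfolding falling_def
  by (simp add: binomial_gbinomial gbinomial_mult_fact atLeast0LessThan)

lemma falling_of_nat_eq_0: "m < s \<Longrightarrow> falling (real m) s = 0"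
  by (simp add: falling_of_nat)

lemma sum_alternating_choose_mult_choose:
  assumes "j \<le> k"
  shows "(\<Sum>p=0..k. (-1::real)^p * real (k choose p) * real (p choose j))
    = (if j = k then (-1)^k else 0)"
proof -
  have "(\<Sum>p=0..k. (-1::real)^p * real (k choose p) * real (p choose j))
      = (\<Sum>p=j..k. (-1::real)^p * real (k choose j) * real ((k - j) choose (p - j)))"
  proof (rule sum.mono_neutral_cong_right)
    fix p assume "p \<in> {j..k}"
    then have "(k choose p) * (p choose j) = (k choose j) * ((k - j) choose (p - j))"
      by (intro choose_mult) auto
    then show "(-1::real)^p * real (k choose p) * real (p choose j)
        = (-1)^p * real (k choose j) * real ((k - j) choose (p - j))"
      by (metis mult.assoc of_nat_mult)
  qed auto
  also have "\<dots> = (\<Sum>i=0..k-j. (-1::real)^(i+j) * real (k choose j) * real ((k - j) choose i))"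
    using sum.shift_bounds_cl_nat_ivl[of "\<lambda>p. (-1::real)^p * real (k choose j) * real ((k - j) choose (p - j))" 0 j "k-j"] assms
    by simp
  also have "\<dots> = (-1)^j * real (k choose j) * (\<Sum>i\<le>k-j. (-1::real)^i * real ((k - j) choose i))"
    by (simp add: sum_distrib_left power_add atLeast0AtMost mult_ac)
  also have "\<dots> = (if j = k then (-1)^k else 0)"
    using choose_alternating_sum[of "k - j", where 'a=real] assms
    by (cases "j = k") (simp_all del: of_nat_sum)
  finally show ?thesis .
qed

lemma sum_alternating_choose_falling:
  "(\<Sum>p=0..k. (-1::real)^p * real (k choose p) * falling (real p) j)
    = (if j = k then (-1)^k * fact k else 0)"
proof (cases "j \<le> k")
  case True
  have "(\<Sum>p=0..k. (-1::real)^p * real (k choose p) * falling (real p) j)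
     = fact j * (\<Sum>p=0..k. (-1::real)^p * real (k choose p) * real (p choose j))"
    by (simp add: falling_of_nat sum_distrib_left mult_ac)
  then show ?thesis
    using sum_alternating_choose_mult_choose[OF True] by simp
next
  case False
  then show ?thesis by (auto simp: falling_of_nat intro!: sum.neutral)
qed

lemma falling_coeff_eq_alternating_sum:
  fixes c :: "nat \<Rightarrow> real"
  assumes "\<forall>j>N. c j = 0" and "\<forall>m::nat. F (real m) = (\<Sum>j\<le>N. c j * falling (real m) j)"
  shows "(-1) ^ k / fact k * (\<Sum>p = 0..k. (-1) ^ p * real (k choose p) * F (real p)) = c k"
proof -
  have "(\<Sum>p = 0..k. (-1) ^ p * real (k choose p) * F (real p))
      = (\<Sum>j\<le>N. c j * (\<Sum>p = 0..k. (-1) ^ p * real (k choose p) * falling (real p) j))"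
    using assms(2) by (simp add: sum_distrib_left sum_distrib_right mult_ac sum.swap[of _ "{0..k}"])
  also have "\<dots> = (if k \<le> N then c k * ((-1)^k * fact k) else 0)"
    by (simp add: sum_alternating_choose_falling if_distrib sum.delta cong: if_cong)
  also have "\<dots> = c k * ((-1)^k * fact k)"
    using assms(1) by auto
  finally show ?thesis
    by (simp flip: power_add mult.assoc)
qed

definition falling_poly :: "nat \<Rightarrow> real poly" where
  "falling_poly j = (\<Prod>i<j. [:- of_nat i, 1:])"

lemma poly_falling_poly: "poly (falling_poly j) x = falling x j"
  by (simp add: falling_poly_def falling_def poly_prod)

lemma degree_falling_poly: "degree (falling_poly j) = j"
  unfolding falling_poly_def by (subst degree_prod_eq_sum_degree) auto

lemma lead_coeff_falling_poly: "coeff (falling_poly j) j = 1"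
  using lead_coeff_prod[of "\<lambda>i. [:- real i, 1:]" "{..<j}"] degree_falling_poly[of j]
  unfolding falling_poly_def by simp

lemma falling_basis_expansion:
  fixes G :: "real poly"
  assumes "degree G \<le> N"
  shows "\<exists>c. (\<forall>j>N. c j = 0) \<and> (\<forall>x. poly G x = (\<Sum>j\<le>N. c j * falling x j))"
  using assms
proof (induction N arbitrary: G)
  case 0
  then obtain a where "G = [:a:]"
    by (metis degree0_coeffs le_zero_eq)
  then show ?case
    by (intro exI[of _ "\<lambda>j. if j = 0 then a else 0"]) (simp add: falling_def)
next
  case (Suc N)
  define a where "a = coeff G (Suc N)"
  define H where "H = G - smult a (falling_poly (Suc N))"
  have "degree H \<le> Suc N"
    unfolding H_def using Suc.prems degree_falling_poly
    by (metis degree_diff_le degree_smult_le le_trans)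
  moreover have "coeff H (Suc N) = 0"
    unfolding H_def a_def by (simp add: lead_coeff_falling_poly)
  ultimately have "degree H \<le> N"
    by (metis Suc_lessI coeff_eq_0 degree_le le_less_trans order.refl)
  from Suc.IH[OF this] obtain c where
    c: "\<forall>j>N. c j = 0" "\<forall>x. poly H x = (\<Sum>j\<le>N. c j * falling x j)"
    by blast
  have "poly G x = (\<Sum>j\<le>Suc N. (c(Suc N := a)) j * falling x j)" for x
  proof -
    have "G = H + smult a (falling_poly (Suc N))"
      unfolding H_def by simp
    then show ?thesis
      using c by (simp add: poly_falling_poly)
  qed
  moreover have "\<forall>j>Suc N. (c(Suc N := a)) j = 0"
    using c by auto
  ultimately show ?case
    by blast
qed

lemma higher_pderiv_monom_falling:
  "(pderiv ^^ s) (monom a m) = monom (a * falling (real m) s) (m - s)"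
proof (induction s)
  case 0
  then show ?case by (simp add: falling_def)
next
  case (Suc s)
  have "real (m - s) * (a * falling (real m) s) = a * falling (real m) (Suc s)"
    by (cases "s \<le> m") (simp_all add: falling_Suc of_nat_diff falling_of_nat_eq_0)
  then show ?case
    using Suc by (simp add: pderiv_monom)
qed

lemma rs_op_monom:
  assumes "s \<le> r"
  shows "rs_op lam r s k (monom a m)
    = monom (a * (falling (real m) s - real k * lam)) (m + (r - s))"
proof (cases "s \<le> m")
  case True
  then have "r + (m - s) = m + (r - s)" "r - s + m = m + (r - s)"
    using assms by simp_all
  then show ?thesis
    unfolding rs_op_def higher_pderiv_monom_falling
    by (simp add: mult_monom smult_monom diff_monom algebra_simps)
next
  case False
  then show ?thesis
    unfolding rs_op_def higher_pderiv_monom_falling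
    by (simp add: mult_monom smult_monom falling_of_nat_eq_0 minus_monom add.commute)
qed

definition rs_weight :: "real \<Rightarrow> nat \<Rightarrow> nat \<Rightarrow> nat \<Rightarrow> real \<Rightarrow> real" where
  "rs_weight lam r s n x =
    (\<Prod>j = 1..n. falling (x + real (j - 1) * (real r - real s)) s - real (n - j) * lam)"

lemma rs_weight_Suc:
  "rs_weight lam r s (Suc n) x
    = (falling x s - real n * lam) * rs_weight lam r s n (x + (real r - real s))"
proof -
  have "rs_weight lam r s (Suc n) x = (falling x s - real n * lam) *
     (\<Prod>j = Suc 1..Suc n. falling (x + real (j - 1) * (real r - real s)) s - real (Suc n - j) * lam)"
    unfolding rs_weight_def by (subst prod.atLeast_Suc_atMost) auto
  also have "(\<Prod>j = Suc 1..Suc n. falling (x + real (j - 1) * (real r - real s)) s - real (Suc n - j) * lam)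
      = (\<Prod>j = 1..n. falling (x + (real r - real s) + real (j - 1) * (real r - real s)) s - real (n - j) * lam)"
  proof (subst prod.shift_bounds_cl_Suc_ivl, rule prod.cong)
    fix j assume "j \<in> {1..n}"
    then have "x + real (Suc j - 1) * (real r - real s)
        = x + (real r - real s) + real (j - 1) * (real r - real s)"
      by (simp add: of_nat_diff algebra_simps)
    then show "falling (x + real (Suc j - 1) * (real r - real s)) s - real (Suc n - Suc j) * lam
        = falling (x + (real r - real s) + real (j - 1) * (real r - real s)) s - real (n - j) * lam"
      by (simp only: diff_Suc_Suc)
  qed simp
  finally show ?thesis
    unfolding rs_weight_def .
qed

lemma rs_op_prod_monom:
  assumes "s \<le> r"
  shows "rs_op_prod lam r s n (monom a m) = monom (a * rs_weight lam r s n (real m)) (m + n * (r - s))"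
  unfolding rs_op_prod_def
proof (induction n arbitrary: a m)
  case 0
  then show ?case by (simp add: rs_weight_def)
next
  case (Suc n)
  have exponent: "m + (r - s) + n * (r - s) = m + Suc n * (r - s)"
    by simp
  have real_exponent: "real (m + (r - s)) = real m + (real r - real s)"
    using assms by (simp add: of_nat_diff)
  have "foldr (rs_op lam r s) [0..<Suc n] (monom a m)
      = foldr (rs_op lam r s) [0..<n] (monom (a * (falling (real m) s - real n * lam)) (m + (r - s)))"
    by (simp add: rs_op_monom[OF assms])
  also have "\<dots> = monom (a * rs_weight lam r s (Suc n) (real m)) (m + Suc n * (r - s))"
    unfolding Suc.IH exponent real_exponent rs_weight_Suc by (simp add: mult_ac)
  finally show ?case .
qed

lemma rs_weight_falling_expansion:
  "\<exists>c. (\<forall>j>n * s. c j = 0) \<and>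
    (\<forall>x. rs_weight lam r s n x = (\<Sum>j\<le>n * s. c j * falling x j))"
proof -
  define G where "G = (\<Prod>j = 1..n. pcompose (falling_poly s) [:real (j - 1) * (real r - real s), 1:]
    - [:real (n - j) * lam:])"
  have "poly G x = rs_weight lam r s n x" for x
    unfolding G_def rs_weight_def
    by (simp add: poly_prod poly_pcompose poly_falling_poly add.commute)
  moreover have "degree G \<le> (\<Sum>j = 1..n. s)"
    unfolding G_def
  proof (rule order.trans[OF degree_prod_sum_le[OF finite_atLeastAtMost]], rule sum_mono)
    fix j
    have "degree (pcompose (falling_poly s) [:real (j - 1) * (real r - real s), 1:]) = s"
      by (simp add: degree_pcompose degree_falling_poly)
    then show "(degree \<circ> (\<lambda>j. pcompose (falling_poly s) [:real (j - 1) * (real r - real s), 1:]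
        - [:real (n - j) * lam:])) j \<le> s"
      by (simp add: degree_diff_le)
  qed
  ultimately show ?thesis
    using falling_basis_expansion[of G "n * s"] by (simp add: mult.commute)
qed

definition normal_op :: "nat \<Rightarrow> nat \<Rightarrow> (nat \<Rightarrow> real) \<Rightarrow> real poly \<Rightarrow> real poly" where
  "normal_op M N c f = monom 1 M * (\<Sum>j\<le>N. smult (c j) (monom 1 j * (pderiv ^^ j) f))"

lemma normal_op_monom:
  "normal_op M N c (monom a m) = monom (a * (\<Sum>j\<le>N. c j * falling (real m) j)) (m + M)"
proof -
  have "monom 1 j * (pderiv ^^ j) (monom a m) = monom (a * falling (real m) j) m" for j
    by (cases "j \<le> m") (simp_all add: higher_pderiv_monom_falling mult_monom falling_of_nat_eq_0)
  then show ?thesis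
    unfolding normal_op_def
    by (simp add: smult_monom monom_sum sum_distrib_left mult_ac mult_monom add.commute)
qed

lemma normal_op_add: "normal_op M N c (f + g) = normal_op M N c f + normal_op M N c g"
  unfolding normal_op_def
  by (simp add: higher_pderiv_add smult_add_right distrib_left sum.distrib)

lemma rs_op_prod_add: "rs_op_prod lam r s n (f + g) = rs_op_prod lam r s n f + rs_op_prod lam r s n g"
proof -
  have "rs_op lam r s k (f + g) = rs_op lam r s k f + rs_op lam r s k g" for k f g
    unfolding rs_op_def by (simp add: higher_pderiv_add algebra_simps smult_add_right)
  then have "foldr (rs_op lam r s) ks (f + g)
      = foldr (rs_op lam r s) ks f + foldr (rs_op lam r s) ks g" for ks
    by (induction ks) simp_all
  then show ?thesis
    unfolding rs_op_prod_def .
qed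

lemma additive_poly_fun_eqI:
  fixes L R :: "'a::comm_ring_1 poly \<Rightarrow> 'b::ab_group_add"
  assumes "\<And>f g. L (f + g) = L f + L g" and "\<And>f g. R (f + g) = R f + R g"
    and "\<And>a m. L (monom a m) = R (monom a m)"
  shows "L = R"
proof
  fix f
  have zero: "L 0 = 0" "R 0 = 0"
    using assms(1,2)[of 0 0] by simp_all
  have "L (\<Sum>i\<in>A. monom (h i) i) = R (\<Sum>i\<in>A. monom (h i) i)" if "finite A" for A h
    using that by (induction A rule: finite_induct) (simp_all add: assms zero)
  from this[of "{..degree f}" "coeff f"] show "L f = R f"
    by (simp add: poly_as_sum_of_monoms)
qed

lemma rs_op_prod_eq_normal_op_iff:
  assumes "s \<le> r"
  shows "rs_op_prod lam r s n = normal_op (n * (r - s)) N c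
    \<longleftrightarrow> (\<forall>m::nat. rs_weight lam r s n (real m) = (\<Sum>j\<le>N. c j * falling (real m) j))"
proof
  assume eq: "rs_op_prod lam r s n = normal_op (n * (r - s)) N c"
  show "\<forall>m::nat. rs_weight lam r s n (real m) = (\<Sum>j\<le>N. c j * falling (real m) j)"
  proof
    fix m :: nat
    have "monom (rs_weight lam r s n (real m)) (m + n * (r - s))
        = monom (\<Sum>j\<le>N. c j * falling (real m) j) (m + n * (r - s))"
      using fun_cong[OF eq, of "monom 1 m"]
      unfolding rs_op_prod_monom[OF assms] normal_op_monom by simp
    then show "rs_weight lam r s n (real m) = (\<Sum>j\<le>N. c j * falling (real m) j)"
      by (simp only: monom_eq_iff)
  qed
next
  assume "\<forall>m::nat. rs_weight lam r s n (real m) = (\<Sum>j\<le>N. c j * falling (real m) j)"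
  then show "rs_op_prod lam r s n = normal_op (n * (r - s)) N c"
    by (intro additive_poly_fun_eqI rs_op_prod_add normal_op_add)
      (simp add: rs_op_prod_monom[OF assms] normal_op_monom)
qed

lemma stirling_rs_eqI:
  assumes "s \<le> r" and c_vanish: "\<forall>j>n * s. c j = 0"
    and c_weight: "\<forall>m::nat. rs_weight lam r s n (real m) = (\<Sum>j\<le>n * s. c j * falling (real m) j)"
  shows "stirling_rs lam r s n = c"
  unfolding stirling_rs_def normal_op_def[symmetric]
proof (rule the_equality)
  show "(\<forall>j>n * s. c j = 0) \<and> (\<forall>f. rs_op_prod lam r s n f = normal_op (n * (r - s)) (n * s) c f)"
    using c_vanish c_weight rs_op_prod_eq_normal_op_iff[OF assms(1)] by metis
next
  fix d
  assume d: "(\<forall>j>n * s. d j = 0) \<and> (\<forall>f. rs_op_prod lam r s n f = normal_op (n * (r - s)) (n * s) d f)"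
  then have d_weight: "\<forall>m::nat. rs_weight lam r s n (real m) = (\<Sum>j\<le>n * s. d j * falling (real m) j)"
    using rs_op_prod_eq_normal_op_iff[OF assms(1)] by blast
  show "d = c"
  proof
    fix k
    show "d k = c k"
      using falling_coeff_eq_alternating_sum[OF conjunct1[OF d] d_weight, of k]
        falling_coeff_eq_alternating_sum[OF c_vanish c_weight, of k] by simp
  qed
qed

theorem theorem3:
  fixes lam :: real and r s n k :: nat
  assumes "1 \<le> s" and "s \<le> r" and "1 \<le> n"
  shows "(-1) ^ k / fact k *
      (\<Sum>p = 0..k. (-1) ^ p * real (k choose p) *
         (\<Prod>j = 1..n. falling (real p + real (j - 1) * (real r - real s)) s
                        - real (n - j) * lam))
    = (if k \<le> n * s then stirling_rs lam r s n k else 0)"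
proof -
  obtain c where c_vanish: "\<forall>j>n * s. c j = 0"
    and c_weight: "\<forall>x. rs_weight lam r s n x = (\<Sum>j\<le>n * s. c j * falling x j)"
    using rs_weight_falling_expansion by blast
  then have "stirling_rs lam r s n = c"
    using stirling_rs_eqI[OF assms(2)] by blast
  moreover have "(-1) ^ k / fact k *
      (\<Sum>p = 0..k. (-1) ^ p * real (k choose p) * rs_weight lam r s n (real p)) = c k"
    using falling_coeff_eq_alternating_sum c_vanish c_weight by blast
  ultimately show ?thesis
    using c_vanish unfolding rs_weight_def by auto
qed

end
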